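(* Let $\alpha\in\mathbb{F}_q^*$, let $1\le k\le n$, and let $\mathscr{C}\subseteq\mathbb{F}_q^n$ be a linear code of dimension $n-k$. Then $\mathscr{C}$ is a skew $\alpha$-cyclic code if and only if $\mathscr{C}$ has a parity check matrix of the form $$[\,{}^tP,\ {}^t(P\tau),\ {}^t(P\tau^2),\ \dots,\ {}^t(P\tau^{n-1})\,]$$ for some $P\in\mathbb{F}_q^k$ and some semi-linear map $\tau=\Theta\circ T$ with $T\in GL(k,q)$, such that $P\tau^n=\alpha P$.
   Context: Let $\mathbb{F}_q$ be a finite field and $\theta$ a field automorphism of $\mathbb{F}_q$. A linear code $\mathscr{C}\subseteq\mathbb{F}_q^n$ is skew $\alpha$-cyclic if it is invariant under $(c_0,\dots,c_{n-1})\mapsto(\alpha\theta(c_{n-1}),\theta(c_0),\dots,\theta(c_{n-2}))$. Vectors are row vectors and ${}^tv$ denotes the transpose. For $P\in\mathbb{F}_q^k$ and $T\in GL(k,q)$, the semi-linear map $\tau=\Theta\circ T$ acts on the right by $P\tau:=\Theta(P)T$, where $\Theta(P)$ applies $\theta$ to each coordinate; $\tau^i$ is the $i$-fold iterate. A parity check matrix of an $[n,n-k]$-code $\mathscr{C}$ is a $k\times n$ matrix $H$ of rank $k$ with $\mathscr{C}=\{\vec c\in\mathbb{F}_q^n:\vec c\,{}^tH=0\}$. *)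

theory Defs
  imports "Jordan_Normal_Form.DL_Rank" "Jordan_Normal_Form.Matrix_Kernel"
begin

definition field_automorphism :: "('a::field \<Rightarrow> 'a) \<Rightarrow> bool" where
  "field_automorphism \<theta> \<longleftrightarrow> bij \<theta> \<and> \<theta> 1 = 1 \<and>
     (\<forall>x y. \<theta> (x + y) = \<theta> x + \<theta> y) \<and> (\<forall>x y. \<theta> (x * y) = \<theta> x * \<theta> y)"

definition skew_shift :: "('a::field \<Rightarrow> 'a) \<Rightarrow> 'a \<Rightarrow> nat \<Rightarrow> 'a vec \<Rightarrow> 'a vec" where
  "skew_shift \<theta> \<alpha> n c = vec n (\<lambda>i. if i = 0 then \<alpha> * \<theta> (c $ (n - 1)) else \<theta> (c $ (i - 1)))"

definition skew_cyclic :: "('a::field \<Rightarrow> 'a) \<Rightarrow> 'a \<Rightarrow> nat \<Rightarrow> 'a vec set \<Rightarrow> bool" where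
  "skew_cyclic \<theta> \<alpha> n C \<longleftrightarrow> (\<forall>c\<in>C. skew_shift \<theta> \<alpha> n c \<in> C)"

definition linear_code :: "nat \<Rightarrow> 'a::field vec set \<Rightarrow> bool" where
  "linear_code n C \<longleftrightarrow> subspace class_ring C (module_vec TYPE('a) n)"

definition code_dim :: "nat \<Rightarrow> 'a::field vec set \<Rightarrow> nat" where
  "code_dim n C = vectorspace.dim class_ring ((module_vec TYPE('a) n)\<lparr>carrier := C\<rparr>)"

text \<open>Semi-linear map tau = Theta o T acting on row vectors: P tau = Theta(P) T.\<close>
definition semilin :: "('a::field \<Rightarrow> 'a) \<Rightarrow> 'a mat \<Rightarrow> 'a vec \<Rightarrow> 'a vec" where
  "semilin \<theta> T P = vec (dim_vec P) (\<lambda>j. \<Sum>i<dim_vec P. \<theta> (P $ i) * T $$ (i, j))"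

definition parity_check_matrix :: "nat \<Rightarrow> nat \<Rightarrow> 'a::field mat \<Rightarrow> 'a vec set \<Rightarrow> bool" where
  "parity_check_matrix k n H C \<longleftrightarrow> H \<in> carrier_mat k n \<and> vec_space.rank k H = k \<and>
     C = {c \<in> carrier_vec n. H *\<^sub>v c = 0\<^sub>v k}"

definition orbit_matrix :: "nat \<Rightarrow> nat \<Rightarrow> ('a vec \<Rightarrow> 'a vec) \<Rightarrow> 'a vec \<Rightarrow> 'a mat" where
  "orbit_matrix k n \<tau> P = mat_of_cols k (map (\<lambda>j. (\<tau> ^^ j) P) [0..<n])"

end

theory Submission
  imports Defs
begin

text \<open>
  Call a k \<times> n matrix H intertwining for the skew shift s and a map \<tau> if
  H (s c) = \<tau> (H c) for all c. Evaluating this identity at the unit vectors shows that the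
  columns of H are P, P\<tau>, ..., P\<tau>^(n-1) with P\<tau>^n = \<alpha>P for its first column P; conversely
  each such orbit matrix intertwines s with \<tau> = \<Theta> \<circ> T. The kernel of an intertwining matrix
  is s-invariant because \<tau> 0 = 0.

  For a skew-cyclic code C take a parity check matrix H with a right inverse R (extend a basis
  of C to one of the whole space). As c - R H c lies in C, the vectors s c and s (R H c) have
  the same syndrome, and as s is \<theta>-semilinear this makes H intertwining for some \<tau> = \<Theta> \<circ> T.
  Finally \<tau> \<circ> H = H \<circ> s is onto, so T is invertible.
\<close>

lemma field_automorphism_imp_field_hom:
  assumes "field_automorphism \<theta>"
  shows "field_hom \<theta>"
proof
  show add: "\<theta> (x + y) = \<theta> x + \<theta> y" "\<theta> 1 = 1" "\<theta> (x * y) = \<theta> x * \<theta> y" for x y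
    using assms unfolding field_automorphism_def by blast+
  show "\<theta> 0 = 0" using add(1)[of 0 0] by (metis add.right_neutral add_left_cancel)
qed

lemma index_mult_mat_vec_sum:
  assumes "A \<in> carrier_mat k n" "v \<in> carrier_vec n" "i < k"
  shows "(A *\<^sub>v v) $ i = (\<Sum>l<n. A $$ (i, l) * v $ l)"
  using assms by (auto simp: scalar_prod_def atLeast0LessThan intro!: sum.cong)

lemma mult_mat_vec_unit_vec:
  fixes A :: "'a::semiring_1 mat"
  assumes "A \<in> carrier_mat k n" and "j < n"
  shows "A *\<^sub>v unit_vec n j = col A j"
  using assms by (intro eq_vecI) auto

lemma finite_carrier_vec: "finite (carrier_vec n :: 'a::finite vec set)"
proof -
  have "carrier_vec n \<subseteq> (\<lambda>f. vec n f) ` ({..<n} \<rightarrow>\<^sub>E (UNIV :: 'a set))"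
  proof
    fix v :: "'a vec" assume v: "v \<in> carrier_vec n"
    then have "v = vec n (restrict (\<lambda>i. v $ i) {..<n})" by (intro eq_vecI) auto
    moreover have "restrict (\<lambda>i. v $ i) {..<n} \<in> {..<n} \<rightarrow>\<^sub>E (UNIV :: 'a set)" by simp
    ultimately show "v \<in> (\<lambda>f. vec n f) ` ({..<n} \<rightarrow>\<^sub>E UNIV)" by (rule image_eqI)
  qed
  moreover have "finite ((\<lambda>f. vec n f) ` ({..<n} \<rightarrow>\<^sub>E (UNIV :: 'a set)))"
    by (intro finite_imageI finite_PiE) auto
  ultimately show ?thesis by (rule finite_subset)
qed

lemma rank_eq_if_surj:
  fixes A :: "'a::field mat"
  assumes A: "A \<in> carrier_mat k n"
    and surj: "\<And>y. y \<in> carrier_vec k \<Longrightarrow> \<exists>x \<in> carrier_vec n. A *\<^sub>v x = y"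
  shows "vec_space.rank k A = k"
proof -
  interpret vec_space "TYPE('a)" k .
  have span: "span (set (cols A)) = carrier_vec k"
    using col_space_eq[OF A] surj A unfolding col_space_def by auto
  have V: "V\<lparr>carrier := carrier_vec k\<rparr> = V" by (simp add: module_vec_def)
  show ?thesis unfolding rank_def span V by (fact dim_is_n)
qed

lemma det_ne_zero_imp_inverse:
  fixes A :: "'a::field mat"
  assumes "A \<in> carrier_mat k k" and "det A \<noteq> 0"
  obtains B where "B \<in> carrier_mat k k" "B * A = 1\<^sub>m k" "A * B = 1\<^sub>m k"
proof -
  have "A \<in> Units (ring_mat TYPE('a) k ())" by (rule det_non_zero_imp_unit[OF assms])
  then show thesis using that unfolding Units_def by (auto simp: ring_mat_simps)
qed

lemma det_ne_zero_imp_invertible_mat: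
  fixes A :: "'a::field mat"
  assumes "A \<in> carrier_mat k k" and "det A \<noteq> 0"
  shows "invertible_mat A"
proof -
  obtain B where "B \<in> carrier_mat k k" "B * A = 1\<^sub>m k" "A * B = 1\<^sub>m k"
    using det_ne_zero_imp_inverse[OF assms] .
  then show ?thesis using assms(1) unfolding invertible_mat_def inverts_mat_def by auto
qed

section \<open>Parity check matrices\<close>

lemma mat_of_cols_append_mult_vec:
  assumes bs: "set bs \<subseteq> carrier_vec n" and es: "set es \<subseteq> carrier_vec n"
    and x: "x \<in> carrier_vec (length (bs @ es))"
    and x0: "\<And>j. length bs \<le> j \<Longrightarrow> j < length (bs @ es) \<Longrightarrow> x $ j = 0"
  shows "mat_of_cols n (bs @ es) *\<^sub>v x = mat_of_cols n bs *\<^sub>v vec (length bs) (\<lambda>j. x $ j)"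
proof (rule eq_vecI)
  fix i assume "i < dim_vec (mat_of_cols n bs *\<^sub>v vec (length bs) (\<lambda>j. x $ j))"
  then have i: "i < n" by simp
  have "(mat_of_cols n (bs @ es) *\<^sub>v x) $ i =
      (\<Sum>l<length (bs @ es). mat_of_cols n (bs @ es) $$ (i, l) * x $ l)"
    using i x by (intro index_mult_mat_vec_sum) auto
  also have "\<dots> = (\<Sum>l<length bs. mat_of_cols n (bs @ es) $$ (i, l) * x $ l)"
  proof (rule sum.mono_neutral_right)
    show "\<forall>l \<in> {..<length (bs @ es)} - {..<length bs}. mat_of_cols n (bs @ es) $$ (i, l) * x $ l = 0"
      using x0 by simp
  qed auto
  also have "\<dots> = (mat_of_cols n bs *\<^sub>v vec (length bs) (\<lambda>j. x $ j)) $ i"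
    using i by (auto simp: scalar_prod_def atLeast0LessThan mat_of_cols_index nth_append intro!: sum.cong)
  finally show "(mat_of_cols n (bs @ es) *\<^sub>v x) $ i = \<dots>" .
qed simp

lemma (in vec_space) span_eq_image_mat_of_cols_append:
  assumes bs: "set bs \<subseteq> carrier_vec n" and es: "set es \<subseteq> carrier_vec n"
  shows "span (set bs) = {mat_of_cols n (bs @ es) *\<^sub>v x | x.
    x \<in> carrier_vec (length (bs @ es)) \<and> (\<forall>j. length bs \<le> j \<longrightarrow> j < length (bs @ es) \<longrightarrow> x $ j = 0)}"
    (is "_ = ?image")
proof -
  let ?Mb = "mat_of_cols n bs"
  have Mb: "?Mb \<in> carrier_mat n (length bs)" by simp
  have span: "span (set bs) = {y \<in> carrier_vec n. \<exists>z \<in> carrier_vec (length bs). ?Mb *\<^sub>v z = y}"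
    using col_space_eq[OF Mb, unfolded mat_of_cols_carrier(2,3)]
    unfolding col_space_def cols_mat_of_cols[OF bs] .
  show ?thesis
  proof (intro equalityI subsetI)
    fix y assume "y \<in> span (set bs)"
    then obtain z where z: "z \<in> carrier_vec (length bs)" and y: "y = ?Mb *\<^sub>v z"
      unfolding span by blast
    define x where "x = vec (length (bs @ es)) (\<lambda>j. if j < length bs then z $ j else 0)"
    have "vec (length bs) (\<lambda>j. x $ j) = z" using z by (intro eq_vecI) (auto simp: x_def)
    then have "y = mat_of_cols n (bs @ es) *\<^sub>v x"
      using y bs es by (subst mat_of_cols_append_mult_vec) (auto simp: x_def)
    then show "y \<in> ?image" by (auto simp: x_def)
  next
    fix y assume "y \<in> ?image"
    then obtain x where x: "x \<in> carrier_vec (length (bs @ es))"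
      and x0: "\<forall>j. length bs \<le> j \<longrightarrow> j < length (bs @ es) \<longrightarrow> x $ j = 0"
      and y: "y = mat_of_cols n (bs @ es) *\<^sub>v x" by blast
    have "y = ?Mb *\<^sub>v vec (length bs) (\<lambda>j. x $ j)"
      unfolding y using x0 by (intro mat_of_cols_append_mult_vec[OF bs es x]) auto
    then show "y \<in> span (set bs)" unfolding span by (force intro: mult_mat_vec_carrier[OF Mb])
  qed
qed

lemma kernel_of_lower_rows_of_inverse:
  fixes M Mi :: "'a::field mat"
  assumes M: "M \<in> carrier_mat n n" and Mi: "Mi \<in> carrier_mat n n"
    and inv: "Mi * M = 1\<^sub>m n" "M * Mi = 1\<^sub>m n" and "m \<le> n"
  shows "{c \<in> carrier_vec n. mat (n - m) n (\<lambda>(i, j). Mi $$ (m + i, j)) *\<^sub>v c = 0\<^sub>v (n - m)} =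
    {M *\<^sub>v x | x. x \<in> carrier_vec n \<and> (\<forall>j. m \<le> j \<longrightarrow> j < n \<longrightarrow> x $ j = 0)}"
proof -
  define H where "H = mat (n - m) n (\<lambda>(i, j). Mi $$ (m + i, j))"
  have H: "H \<in> carrier_mat (n - m) n" by (simp add: H_def)
  have H_index: "(H *\<^sub>v c) $ i = (Mi *\<^sub>v c) $ (m + i)" if "c \<in> carrier_vec n" "i < n - m" for c i
    using that Mi by (simp add: H_def scalar_prod_def)
  have "c \<in> carrier_vec n \<and> H *\<^sub>v c = 0\<^sub>v (n - m) \<longleftrightarrow>
      (\<exists>x. c = M *\<^sub>v x \<and> x \<in> carrier_vec n \<and> (\<forall>j. m \<le> j \<longrightarrow> j < n \<longrightarrow> x $ j = 0))" for c
  proof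
    assume c: "c \<in> carrier_vec n \<and> H *\<^sub>v c = 0\<^sub>v (n - m)"
    have "(Mi *\<^sub>v c) $ j = 0" if "m \<le> j" "j < n" for j
      using c H_index[of c "j - m"] that by simp
    moreover have "c = M *\<^sub>v (Mi *\<^sub>v c)" using c M Mi by (simp add: inv flip: assoc_mult_mat_vec)
    ultimately show "\<exists>x. c = M *\<^sub>v x \<and> x \<in> carrier_vec n \<and> (\<forall>j. m \<le> j \<longrightarrow> j < n \<longrightarrow> x $ j = 0)"
      using c Mi by (intro exI[of _ "Mi *\<^sub>v c"]) auto
  next
    assume "\<exists>x. c = M *\<^sub>v x \<and> x \<in> carrier_vec n \<and> (\<forall>j. m \<le> j \<longrightarrow> j < n \<longrightarrow> x $ j = 0)"
    then obtain x where x: "x \<in> carrier_vec n" and x0: "\<forall>j. m \<le> j \<longrightarrow> j < n \<longrightarrow> x $ j = 0"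
      and c: "c = M *\<^sub>v x" by blast
    have c_carrier: "c \<in> carrier_vec n" using c x M by simp
    have "Mi *\<^sub>v c = x" using c x M Mi by (simp add: inv flip: assoc_mult_mat_vec)
    then have "H *\<^sub>v c = 0\<^sub>v (n - m)"
      using H c_carrier x0 by (intro eq_vecI) (auto simp: H_index simp del: index_mult_mat_vec)
    with c_carrier show "c \<in> carrier_vec n \<and> H *\<^sub>v c = 0\<^sub>v (n - m)" ..
  qed
  then show ?thesis unfolding H_def[symmetric] by blast
qed

lemma (in vec_space) subspace_basis_extension:
  assumes sub: "subspace class_ring C V" and fin: "finite C"
  obtains bs es where "distinct (bs @ es)" "set (bs @ es) \<subseteq> carrier_vec n"
    "lin_indpt (set (bs @ es))" "length (bs @ es) = n"
    "length bs = vectorspace.dim class_ring (vs C)" "span (set bs) = C"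
proof -
  have submod: "submodule class_ring C V" using sub unfolding subspace_def by blast
  have vsC: "vectorspace class_ring (vs C)" using subspace_is_vs[OF sub] .
  have CV: "C \<subseteq> carrier_vec n" using submod unfolding submodule_def by auto
  have "span C = C" using span_is_subset[OF subset_refl submod] in_own_span[of C] CV by auto
  then have "vectorspace.fin_dim class_ring (vs C)"
    unfolding vectorspace.fin_dim_def[OF vsC]
    using fin span_li_not_depend(1)[OF subset_refl submod] by auto
  then obtain B where "finite B" and basis: "vectorspace.basis class_ring (vs C) B"
    using vectorspace.finite_basis_exists[OF vsC] by blast
  have card_B: "card B = vectorspace.dim class_ring (vs C)"
    using vectorspace.dim_basis[OF vsC \<open>finite B\<close> basis] by simp
  have BC: "B \<subseteq> C" and "\<not> LinearCombinations.module.lin_dep class_ring (vs C) B"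
    and "LinearCombinations.module.span class_ring (vs C) B = C"
    using basis unfolding vectorspace.basis_def[OF vsC] by auto
  then have li_B: "lin_indpt B" and span_B: "span B = C"
    using span_li_not_depend[OF BC submod] by auto
  define S where "S = B \<union> set (unit_vecs n)"
  have SV: "S \<subseteq> carrier_vec n" using BC CV unit_vecs_carrier by (auto simp: S_def)
  have "finite S" using \<open>finite B\<close> by (simp add: S_def)
  \<comment> \<open>a maximal independent subset of S containing B is a basis of the whole space\<close>
  then obtain A where "finite A" and max: "maximal A (\<lambda>T. T \<subseteq> S \<and> lin_indpt T)" and "B \<subseteq> A"
    using maximal_exists_superset[of S "\<lambda>T. T \<subseteq> S \<and> lin_indpt T" B] li_B by (auto simp: S_def)
  have "span S = carrier_vec n"
    using span_is_subset2[OF SV] span_is_monotone[of "set (unit_vecs n)" S] span_unit_vecs_is_carrier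
    by (auto simp: S_def)
  moreover have "V\<lparr>carrier := carrier_vec n\<rparr> = V" by (simp add: module_vec_def)
  ultimately have card_A: "card A = n"
    using dim_span[OF SV \<open>finite S\<close> max] dim_is_n by (simp only:)
  obtain bs where bs: "set bs = B" "distinct bs" using finite_distinct_list[OF \<open>finite B\<close>] by blast
  obtain es where es: "set es = A - B" "distinct es"
    using finite_distinct_list[of "A - B"] \<open>finite A\<close> by blast
  have A: "set (bs @ es) = A" and dist: "distinct (bs @ es)" using bs es \<open>B \<subseteq> A\<close> by auto
  show thesis
  proof
    show "distinct (bs @ es)" by (fact dist)
    show "set (bs @ es) \<subseteq> carrier_vec n" using A max SV unfolding maximal_def by blast
    show "lin_indpt (set (bs @ es))" using A max unfolding maximal_def by blast
    show "length (bs @ es) = n" using A dist card_A by (metis distinct_card)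
    show "length bs = vectorspace.dim class_ring (vs C)" using bs card_B by (metis distinct_card)
    show "span (set bs) = C" using bs span_B by simp
  qed
qed

lemma linear_code_parity_check_right_inverse:
  fixes C :: "'a::{field,finite} vec set"
  assumes code: "linear_code n C" and dim: "code_dim n C = n - k" and "k \<le> n"
  obtains H R where "H \<in> carrier_mat k n" "R \<in> carrier_mat n k" "H * R = 1\<^sub>m k"
    "C = {c \<in> carrier_vec n. H *\<^sub>v c = 0\<^sub>v k}"
proof -
  interpret vec_space "TYPE('a)" n .
  have sub: "subspace class_ring C V" using code unfolding linear_code_def .
  then have "C \<subseteq> carrier_vec n" unfolding subspace_def submodule_def by auto
  then have "finite C" using finite_carrier_vec finite_subset by blast
  then obtain bs es where dist: "distinct (bs @ es)" and ws: "set (bs @ es) \<subseteq> carrier_vec n"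
    and li: "lin_indpt (set (bs @ es))" and len: "length (bs @ es) = n" "length bs = n - k"
    and span: "span (set bs) = C"
    using subspace_basis_extension[OF sub] dim unfolding code_dim_def by metis
  define M where "M = mat_of_cols n (bs @ es)"
  have M: "M \<in> carrier_mat n n" using len(1) unfolding M_def by (metis mat_of_cols_carrier(1))
  have "rank M = n" using lin_indpt_full_rank[OF M] dist li ws by (simp add: M_def)
  then have "det M \<noteq> 0" using det_rank_iff[OF M] by simp
  then obtain Mi where Mi: "Mi \<in> carrier_mat n n" and inv: "Mi * M = 1\<^sub>m n" "M * Mi = 1\<^sub>m n"
    using det_ne_zero_imp_inverse[OF M] by blast
  \<comment> \<open>the first n - k columns of M span C, so the last k rows of its inverse cut out C\<close>
  define H where "H = mat k n (\<lambda>(i, j). Mi $$ (n - k + i, j))"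
  define R where "R = mat n k (\<lambda>(l, j). M $$ (l, n - k + j))"
  show thesis
  proof
    show "H \<in> carrier_mat k n" "R \<in> carrier_mat n k" by (simp_all add: H_def R_def)
    have "(H * R) $$ (i, j) = (Mi * M) $$ (n - k + i, n - k + j)" if "i < k" "j < k" for i j
      using that M Mi \<open>k \<le> n\<close> by (simp add: H_def R_def scalar_prod_def)
    then show "H * R = 1\<^sub>m k" using \<open>k \<le> n\<close> by (intro eq_matI) (auto simp: inv H_def R_def)
    have "C = {M *\<^sub>v x | x. x \<in> carrier_vec n \<and> (\<forall>j. n - k \<le> j \<longrightarrow> j < n \<longrightarrow> x $ j = 0)}"
      using span_eq_image_mat_of_cols_append[of bs es] ws len span by (simp add: M_def)
    also have "\<dots> = {c \<in> carrier_vec n. H *\<^sub>v c = 0\<^sub>v k}"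
      using kernel_of_lower_rows_of_inverse[OF M Mi inv, of "n - k"] \<open>k \<le> n\<close> by (simp add: H_def)
    finally show "C = {c \<in> carrier_vec n. H *\<^sub>v c = 0\<^sub>v k}" .
  qed
qed

section \<open>The skew shift and semilinear maps\<close>

lemma index_skew_shift:
  "l < n \<Longrightarrow> skew_shift \<theta> \<alpha> n c $ l = (if l = 0 then \<alpha> * \<theta> (c $ (n - 1)) else \<theta> (c $ (l - 1)))"
  by (simp add: skew_shift_def)

lemma dim_skew_shift [simp]: "dim_vec (skew_shift \<theta> \<alpha> n c) = n"
  by (simp add: skew_shift_def)

lemma skew_shift_carrier [simp]: "skew_shift \<theta> \<alpha> n c \<in> carrier_vec n"
  by (simp add: skew_shift_def)

lemma skew_shift_unit_vec:
  assumes "field_hom \<theta>" and "Suc j < n"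
  shows "skew_shift \<theta> \<alpha> n (unit_vec n j) = unit_vec n (Suc j)"
proof -
  interpret field_hom \<theta> by fact
  show ?thesis using assms(2) by (intro eq_vecI) (auto simp: index_skew_shift)
qed

lemma skew_shift_unit_vec_last:
  assumes "field_hom \<theta>"
  shows "skew_shift \<theta> \<alpha> (Suc m) (unit_vec (Suc m) m) = \<alpha> \<cdot>\<^sub>v unit_vec (Suc m) 0"
proof -
  interpret field_hom \<theta> by fact
  show ?thesis by (intro eq_vecI) (auto simp: index_skew_shift)
qed

lemma skew_shift_diff:
  assumes "field_hom \<theta>" and "c \<in> carrier_vec n" "d \<in> carrier_vec n"
  shows "skew_shift \<theta> \<alpha> n (c - d) = skew_shift \<theta> \<alpha> n c - skew_shift \<theta> \<alpha> n d"
proof -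
  interpret field_hom \<theta> by fact
  show ?thesis
    using assms(2,3) by (intro eq_vecI) (auto simp: index_skew_shift hom_minus right_diff_distrib)
qed

lemma skew_shift_mult_mat_vec:
  assumes "field_hom \<theta>" and R: "R \<in> carrier_mat n k" and x: "x \<in> carrier_vec k"
  shows "skew_shift \<theta> \<alpha> n (R *\<^sub>v x) =
    mat n k (\<lambda>(l, i). skew_shift \<theta> \<alpha> n (col R i) $ l) *\<^sub>v map_vec \<theta> x"
proof -
  interpret field_hom \<theta> by fact
  show ?thesis
    using R x by (intro eq_vecI)
      (auto simp: index_skew_shift scalar_prod_def atLeast0LessThan hom_sum hom_mult
        sum_distrib_left algebra_simps intro!: sum.cong)
qed

lemma skew_shift_surj:
  assumes "field_automorphism \<theta>" and "\<alpha> \<noteq> 0" and "w \<in> carrier_vec n"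
  shows "\<exists>c \<in> carrier_vec n. skew_shift \<theta> \<alpha> n c = w"
proof
  have "surj \<theta>" using assms(1) bij_is_surj unfolding field_automorphism_def by blast
  then have \<theta>_inv: "\<theta> (inv_into UNIV \<theta> x) = x" for x by (simp add: surj_f_inv_f)
  let ?c = "vec n (\<lambda>l. if l = n - 1 then inv_into UNIV \<theta> (w $ 0 / \<alpha>) else inv_into UNIV \<theta> (w $ Suc l))"
  show "?c \<in> carrier_vec n" by simp
  show "skew_shift \<theta> \<alpha> n ?c = w"
    using assms(2,3) by (intro eq_vecI) (auto simp: index_skew_shift \<theta>_inv)
qed

lemma dim_semilin [simp]: "dim_vec (semilin \<theta> T P) = dim_vec P"
  by (simp add: semilin_def)

lemma index_semilin:
  "j < dim_vec P \<Longrightarrow> semilin \<theta> T P $ j = (\<Sum>i<dim_vec P. \<theta> (P $ i) * T $$ (i, j))"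
  by (simp add: semilin_def)

lemma dim_semilin_pow [simp]: "dim_vec ((semilin \<theta> T ^^ j) P) = dim_vec P"
  by (induction j) auto

lemma semilin_zero:
  assumes "field_hom \<theta>"
  shows "semilin \<theta> T (0\<^sub>v k) = 0\<^sub>v k"
proof -
  interpret field_hom \<theta> by fact
  show ?thesis by (intro eq_vecI) (auto simp: index_semilin)
qed

lemma semilin_eq_transpose_mult:
  assumes "T \<in> carrier_mat k k" and "x \<in> carrier_vec k"
  shows "semilin \<theta> T x = T\<^sup>T *\<^sub>v map_vec \<theta> x"
  using assms by (intro eq_vecI) (auto simp: index_semilin scalar_prod_def atLeast0LessThan mult.commute intro: sum.cong)

lemma orbit_matrix_carrier [simp]: "orbit_matrix k n \<tau> P \<in> carrier_mat k n"
  unfolding orbit_matrix_def by (metis mat_of_cols_carrier(1) length_map length_upt diff_zero)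

lemma dim_orbit_matrix [simp]:
  "dim_row (orbit_matrix k n \<tau> P) = k" "dim_col (orbit_matrix k n \<tau> P) = n"
  using orbit_matrix_carrier carrier_matD by blast+

lemma index_orbit_matrix:
  "i < k \<Longrightarrow> j < n \<Longrightarrow> orbit_matrix k n \<tau> P $$ (i, j) = (\<tau> ^^ j) P $ i"
  by (simp add: orbit_matrix_def mat_of_cols_index)

section \<open>Intertwining matrices\<close>

lemma orbit_matrix_mult_skew_shift:
  assumes "field_hom \<theta>" and "P \<in> carrier_vec k" and "0 < n"
    and period: "(semilin \<theta> T ^^ n) P = \<alpha> \<cdot>\<^sub>v P" and c: "c \<in> carrier_vec n"
  shows "orbit_matrix k n (semilin \<theta> T) P *\<^sub>v skew_shift \<theta> \<alpha> n c =
    semilin \<theta> T (orbit_matrix k n (semilin \<theta> T) P *\<^sub>v c)"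
proof (rule eq_vecI)
  interpret field_hom \<theta> by fact
  define \<tau> where "\<tau> = semilin \<theta> T"
  define H where "H = orbit_matrix k n \<tau> P"
  define Q where "Q j = (\<tau> ^^ j) P" for j
  obtain m where n: "n = Suc m" using \<open>0 < n\<close> gr0_implies_Suc by blast
  have H: "H \<in> carrier_mat k n" by (simp add: H_def)
  have dim_Q [simp]: "dim_vec (Q j) = k" for j using assms(2) by (simp add: Q_def \<tau>_def)
  have H_index: "H $$ (i, j) = Q j $ i" if "i < k" "j < n" for i j
    using that by (simp add: H_def Q_def index_orbit_matrix)
  have Q_Suc: "Q (Suc j) $ i = (\<Sum>l<k. \<theta> (Q j $ l) * T $$ (l, i))" if "i < k" for i j
    using that assms(2) by (simp add: Q_def \<tau>_def index_semilin)
  have Q_n: "Q n $ i = \<alpha> * Q 0 $ i" if "i < k" for i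
    using that period assms(2) by (simp add: Q_def \<tau>_def)
  fix i assume "i < dim_vec (\<tau> (H *\<^sub>v c))"
  then have i: "i < k" using H by (simp add: \<tau>_def)
  have "(H *\<^sub>v skew_shift \<theta> \<alpha> n c) $ i = (\<Sum>l<n. Q l $ i * skew_shift \<theta> \<alpha> n c $ l)"
    using index_mult_mat_vec_sum[OF H _ i] i by (simp add: H_index)
  also have "\<dots> = Q 0 $ i * (\<alpha> * \<theta> (c $ m)) + (\<Sum>l<m. Q (Suc l) $ i * \<theta> (c $ l))"
    unfolding n sum.lessThan_Suc_shift by (simp add: index_skew_shift)
  \<comment> \<open>the factor \<alpha> of the wrap-around term is absorbed by P\<tau>^n = \<alpha>P\<close>
  also have "\<dots> = (\<Sum>l<n. \<theta> (c $ l) * Q (Suc l) $ i)"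
    unfolding n sum.lessThan_Suc using Q_n[OF i] by (simp add: n algebra_simps)
  also have "\<dots> = (\<Sum>j<k. \<theta> (\<Sum>l<n. Q l $ j * c $ l) * T $$ (j, i))"
    using i by (simp add: Q_Suc hom_sum hom_mult sum_distrib_left sum_distrib_right algebra_simps
        sum.swap[of _ "{..<k}"])
  also have "\<dots> = \<tau> (H *\<^sub>v c) $ i"
    using i H c by (auto simp: \<tau>_def index_semilin index_mult_mat_vec_sum H_index
        simp del: index_mult_mat_vec intro!: sum.cong)
  finally show "(H *\<^sub>v skew_shift \<theta> \<alpha> n c) $ i = \<tau> (H *\<^sub>v c) $ i" .
qed simp

lemma intertwining_imp_skew_cyclic_kernel:
  assumes "\<tau> (0\<^sub>v k) = 0\<^sub>v k"
    and "\<And>c. c \<in> carrier_vec n \<Longrightarrow> H *\<^sub>v skew_shift \<theta> \<alpha> n c = \<tau> (H *\<^sub>v c)"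
  shows "skew_cyclic \<theta> \<alpha> n {c \<in> carrier_vec n. H *\<^sub>v c = 0\<^sub>v k}"
  using assms unfolding skew_cyclic_def by auto

lemma intertwining_imp_orbit_matrix:
  assumes "field_hom \<theta>" and H: "H \<in> carrier_mat k n" and "0 < n"
    and intertw: "\<And>c. c \<in> carrier_vec n \<Longrightarrow> H *\<^sub>v skew_shift \<theta> \<alpha> n c = \<tau> (H *\<^sub>v c)"
  shows "orbit_matrix k n \<tau> (col H 0) = H" and "(\<tau> ^^ n) (col H 0) = \<alpha> \<cdot>\<^sub>v col H 0"
proof -
  obtain m where n: "n = Suc m" using \<open>0 < n\<close> gr0_implies_Suc by blast
  have \<tau>_col: "\<tau> (col H j) = H *\<^sub>v skew_shift \<theta> \<alpha> n (unit_vec n j)" if "j < n" for j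
    using intertw[of "unit_vec n j"] mult_mat_vec_unit_vec[OF H that] by simp
  have pow_col: "(\<tau> ^^ j) (col H 0) = col H j" if "j < n" for j
    using that
  proof (induction j)
    case (Suc j)
    then have "(\<tau> ^^ Suc j) (col H 0) = H *\<^sub>v skew_shift \<theta> \<alpha> n (unit_vec n j)"
      by (simp add: \<tau>_col)
    also have "\<dots> = col H (Suc j)"
      using Suc.prems by (simp add: skew_shift_unit_vec[OF assms(1)] mult_mat_vec_unit_vec[OF H])
    finally show ?case .
  qed simp
  show "orbit_matrix k n \<tau> (col H 0) = H"
    using H by (intro eq_matI) (auto simp: index_orbit_matrix pow_col)
  have "(\<tau> ^^ n) (col H 0) = H *\<^sub>v skew_shift \<theta> \<alpha> n (unit_vec n m)"
    using pow_col[of m] \<tau>_col[of m] by (simp add: n)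
  also have "\<dots> = \<alpha> \<cdot>\<^sub>v col H 0"
    using H by (simp add: n skew_shift_unit_vec_last[OF assms(1)] mult_mat_vec mult_mat_vec_unit_vec)
  finally show "(\<tau> ^^ n) (col H 0) = \<alpha> \<cdot>\<^sub>v col H 0" .
qed

lemma skew_cyclic_kernel_imp_intertwining:
  fixes H R :: "'a::field mat"
  assumes "field_hom \<theta>" and H: "H \<in> carrier_mat k n" and R: "R \<in> carrier_mat n k"
    and HR: "H * R = 1\<^sub>m k" and cyc: "skew_cyclic \<theta> \<alpha> n {c \<in> carrier_vec n. H *\<^sub>v c = 0\<^sub>v k}"
  obtains T where "T \<in> carrier_mat k k"
    and "\<And>c. c \<in> carrier_vec n \<Longrightarrow> H *\<^sub>v skew_shift \<theta> \<alpha> n c = semilin \<theta> T (H *\<^sub>v c)"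
proof
  let ?s = "skew_shift \<theta> \<alpha> n"
  define S where "S = mat n k (\<lambda>(l, i). ?s (col R i) $ l)"
  define T where "T = (H * S)\<^sup>T"
  have S: "S \<in> carrier_mat n k" by (simp add: S_def)
  show T: "T \<in> carrier_mat k k" using H S by (simp add: T_def)
  fix c :: "'a vec" assume c: "c \<in> carrier_vec n"
  define d where "d = c - R *\<^sub>v (H *\<^sub>v c)"
  have Hc: "H *\<^sub>v c \<in> carrier_vec k" using H c by simp
  have RHc: "R *\<^sub>v (H *\<^sub>v c) \<in> carrier_vec n" using R Hc by simp
  have d: "d \<in> carrier_vec n" using c RHc by (simp add: d_def)
  have "H *\<^sub>v (R *\<^sub>v (H *\<^sub>v c)) = H *\<^sub>v c"
    using H R Hc by (simp add: HR flip: assoc_mult_mat_vec)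
  \<comment> \<open>c differs from the lift of its syndrome by a codeword\<close>
  then have "H *\<^sub>v d = 0\<^sub>v k"
    using H c RHc by (simp add: d_def mult_minus_distrib_mat_vec)
  then have "H *\<^sub>v ?s d = 0\<^sub>v k" using cyc d unfolding skew_cyclic_def by blast
  moreover have "?s c = ?s d + ?s (R *\<^sub>v (H *\<^sub>v c))"
    using skew_shift_diff[OF assms(1) c RHc] by (intro eq_vecI) (auto simp: d_def)
  ultimately have "H *\<^sub>v ?s c = H *\<^sub>v ?s (R *\<^sub>v (H *\<^sub>v c))"
    using H by (simp add: mult_add_distrib_mat_vec)
  also have "\<dots> = (H * S) *\<^sub>v map_vec \<theta> (H *\<^sub>v c)"
    using H S Hc by (simp add: skew_shift_mult_mat_vec[OF assms(1) R] flip: S_def)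
  also have "\<dots> = semilin \<theta> T (H *\<^sub>v c)"
    using T Hc by (simp add: semilin_eq_transpose_mult T_def)
  finally show "H *\<^sub>v ?s c = semilin \<theta> T (H *\<^sub>v c)" .
qed

lemma intertwining_imp_invertible:
  fixes H R T :: "'a::field mat"
  assumes "field_automorphism \<theta>" and "\<alpha> \<noteq> 0"
    and H: "H \<in> carrier_mat k n" and R: "R \<in> carrier_mat n k" and HR: "H * R = 1\<^sub>m k"
    and T: "T \<in> carrier_mat k k"
    and intertw: "\<And>c. c \<in> carrier_vec n \<Longrightarrow> H *\<^sub>v skew_shift \<theta> \<alpha> n c = semilin \<theta> T (H *\<^sub>v c)"
  shows "invertible_mat T"
proof -
  \<comment> \<open>every y is H (R y), and R y is a skew shift, so y is in the image of T transposed\<close>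
  have "\<exists>x \<in> carrier_vec k. T\<^sup>T *\<^sub>v x = y" if y: "y \<in> carrier_vec k" for y
  proof -
    obtain c where c: "c \<in> carrier_vec n" and "skew_shift \<theta> \<alpha> n c = R *\<^sub>v y"
      using skew_shift_surj[OF assms(1,2)] R y by (metis mult_mat_vec_carrier)
    then have "y = semilin \<theta> T (H *\<^sub>v c)"
      using intertw[OF c] H R y by (simp add: HR flip: assoc_mult_mat_vec)
    also have "\<dots> = T\<^sup>T *\<^sub>v map_vec \<theta> (H *\<^sub>v c)"
      using T H c by (simp add: semilin_eq_transpose_mult)
    finally show ?thesis using H c by (metis map_carrier_vec mult_mat_vec_carrier)
  qed
  then have "vec_space.rank k T\<^sup>T = k" using T by (intro rank_eq_if_surj) auto
  then have "det T\<^sup>T \<noteq> 0" using vec_space.det_rank_iff[of "T\<^sup>T" k] T by simp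
  then show ?thesis using T by (simp add: det_transpose det_ne_zero_imp_invertible_mat)
qed

lemma skew_cyclic_imp_orbit_parity_check:
  fixes \<theta> :: "'a::{field,finite} \<Rightarrow> 'a"
  assumes aut: "field_automorphism \<theta>" and "\<alpha> \<noteq> 0" and "0 < n" and "k \<le> n"
    and "linear_code n C" and "code_dim n C = n - k" and cyclic: "skew_cyclic \<theta> \<alpha> n C"
  shows "\<exists>P T. P \<in> carrier_vec k \<and> T \<in> carrier_mat k k \<and> invertible_mat T \<and>
    ((semilin \<theta> T) ^^ n) P = \<alpha> \<cdot>\<^sub>v P \<and>
    parity_check_matrix k n (orbit_matrix k n (semilin \<theta> T) P) C"
proof -
  have hom: "field_hom \<theta>" using aut by (rule field_automorphism_imp_field_hom)
  obtain H R where H: "H \<in> carrier_mat k n" and R: "R \<in> carrier_mat n k" and HR: "H * R = 1\<^sub>m k"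
    and C: "C = {c \<in> carrier_vec n. H *\<^sub>v c = 0\<^sub>v k}"
    using linear_code_parity_check_right_inverse[OF assms(5,6,4)] .
  obtain T where T: "T \<in> carrier_mat k k"
    and intertw: "\<And>c. c \<in> carrier_vec n \<Longrightarrow> H *\<^sub>v skew_shift \<theta> \<alpha> n c = semilin \<theta> T (H *\<^sub>v c)"
    using skew_cyclic_kernel_imp_intertwining[OF hom H R HR] cyclic unfolding C by metis
  have orbit: "orbit_matrix k n (semilin \<theta> T) (col H 0) = H"
    and period: "(semilin \<theta> T ^^ n) (col H 0) = \<alpha> \<cdot>\<^sub>v col H 0"
    using intertwining_imp_orbit_matrix[OF hom H \<open>0 < n\<close> intertw] by simp_all
  have "H *\<^sub>v (R *\<^sub>v y) = y" if "y \<in> carrier_vec k" for y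
    using that H R by (simp add: HR flip: assoc_mult_mat_vec)
  then have "vec_space.rank k H = k"
    using R by (intro rank_eq_if_surj[OF H]) (metis mult_mat_vec_carrier)
  then have "parity_check_matrix k n (orbit_matrix k n (semilin \<theta> T) (col H 0)) C"
    unfolding orbit parity_check_matrix_def using H C by blast
  moreover have "col H 0 \<in> carrier_vec k" using H by (simp add: carrier_vecI)
  moreover have "invertible_mat T"
    by (rule intertwining_imp_invertible[OF aut \<open>\<alpha> \<noteq> 0\<close> H R HR T intertw])
  ultimately show ?thesis using T period by blast
qed

lemma orbit_parity_check_imp_skew_cyclic:
  assumes hom: "field_hom \<theta>" and P: "P \<in> carrier_vec k" and "0 < n"
    and period: "((semilin \<theta> T) ^^ n) P = \<alpha> \<cdot>\<^sub>v P"
    and "parity_check_matrix k n (orbit_matrix k n (semilin \<theta> T) P) C"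
  shows "skew_cyclic \<theta> \<alpha> n C"
proof -
  have C: "C = {c \<in> carrier_vec n. orbit_matrix k n (semilin \<theta> T) P *\<^sub>v c = 0\<^sub>v k}"
    using assms(5) unfolding parity_check_matrix_def by blast
  show ?thesis
    unfolding C using orbit_matrix_mult_skew_shift[OF hom P \<open>0 < n\<close> period]
    by (rule intertwining_imp_skew_cyclic_kernel[where \<tau> = "semilin \<theta> T", OF semilin_zero[OF hom]])
qed

theorem mainTheorem5:
  fixes \<theta> :: "'a::{field,finite} \<Rightarrow> 'a" and \<alpha> :: 'a and k n :: nat and C :: "'a vec set"
  assumes "field_automorphism \<theta>"
    and "\<alpha> \<noteq> 0"
    and "1 \<le> k" and "k \<le> n"
    and "linear_code n C" and "code_dim n C = n - k"
  shows "skew_cyclic \<theta> \<alpha> n C \<longleftrightarrow>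
    (\<exists>P T. P \<in> carrier_vec k \<and> T \<in> carrier_mat k k \<and> invertible_mat T \<and>
       ((semilin \<theta> T) ^^ n) P = \<alpha> \<cdot>\<^sub>v P \<and>
       parity_check_matrix k n (orbit_matrix k n (semilin \<theta> T) P) C)"
proof -
  have "0 < n" using assms(3,4) by simp
  have hom: "field_hom \<theta>" using assms(1) by (rule field_automorphism_imp_field_hom)
  show ?thesis
    using skew_cyclic_imp_orbit_parity_check[OF assms(1,2) \<open>0 < n\<close> assms(4-6)]
      orbit_parity_check_imp_skew_cyclic[OF hom _ \<open>0 < n\<close>] by blast
qed

end
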